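(* Let $n\mid(q-1)$, let $\delta\ge2$, $b\ge1$, $s\ge1$, $m\ge1$ be integers with $\gcd(b,n)=1$, and let $t\in\{0,1,\dots,n-1\}$. Let $i_1<i_2<\dots<i_s$ be integers with $m-1+\delta\le i_1$, $i_s\le n-\delta$ and $i_{\ell+1}-i_\ell\ge\delta$ for $\ell=1,\dots,s-1$. Put $$A=\{\alpha^{t},\alpha^{t+b},\dots,\alpha^{t+(m-1)b},\alpha^{t+i_1b},\alpha^{t+i_2b},\dots,\alpha^{t+i_sb}\},\qquad B=\{1,\alpha^{b},\alpha^{2b},\dots,\alpha^{(\delta-2)b}\}.$$ Let $d_A^{\perp}$ be the minimum distance of the dual of $C_A$. Then $C_{AB}$ is a cyclic $(d_A^{\perp}-\delta+1,\delta)$-LRC of length $n$ over $\mathbb{F}_q$ with dimension $k=n-m+1-(s+1)(\delta-1)$. Moreover, if $\lceil k/r\rceil=s+1$ where $r=d_A^{\perp}-\delta+1$, then $C_{AB}$ is an optimal $(r,\delta)$-LRC with minimum distance $m+\delta-1$.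
   Context: Let $q$ be a prime power and $n\mid(q-1)$, so the set $R_n$ of all $n$-th roots of unity lies in $\mathbb{F}_q$; let $\alpha\in\mathbb{F}_q$ be a primitive $n$-th root of unity. For $A,B\subseteq R_n$, $AB=\{\beta\gamma:\beta\in A,\gamma\in B\}$, and for $Z\subseteq R_n$, $C_Z$ denotes the cyclic code of length $n$ over $\mathbb{F}_q$ with complete defining set $Z$, i.e. the ideal generated by $\prod_{\beta\in Z}(x-\beta)$ in $\mathbb{F}_q[x]/(x^n-1)$, identified with a subspace of $\mathbb{F}_q^n$; it has dimension $n-|Z|$. Locality: for a linear code $C\subseteq\mathbb{F}_q^n$ and integers $r\ge1$, $\delta\ge2$, the $i$-th coordinate has $(r,\delta)$-locality if there is $S_i\subseteq\{1,\dots,n\}$ with $i\in S_i$, $|S_i|\le r+\delta-1$ such that the punctured code $C|_{S_i}$ has minimum distance at least $\delta$; $C$ is an $(r,\delta)$-LRC if every coordinate has $(r,\delta)$-locality. An $[n,k,d]$ $(r,\delta)$-LRC is optimal if $d=n-k-(\lceil k/r\rceil-1)(\delta-1)+1$ (this quantity is always an upper bound on $d$). *)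

theory Defs
  imports Complex_Main "HOL-Computational_Algebra.Polynomial" "HOL-Library.Function_Algebras"
begin

(* Words of length n over 'a are functions nat => 'a vanishing outside {0..<n};
   coordinates are indexed 0..n-1. *)

definition word_poly :: "nat \<Rightarrow> (nat \<Rightarrow> 'a::field) \<Rightarrow> 'a poly" where
  "word_poly n c = (\<Sum>i<n. monom (c i) i)"

definition xn1 :: "nat \<Rightarrow> 'a::field poly" where
  "xn1 n = monom 1 n - 1"

(* cyclic code with complete defining set Z: the ideal generated by prod_{beta in Z} (x - beta)
   in F[x]/(x^n - 1), identified with coefficient vectors of the reduced representatives *)
definition cyclic_code :: "nat \<Rightarrow> 'a::field set \<Rightarrow> (nat \<Rightarrow> 'a) set" where
  "cyclic_code n Z = {c. (\<forall>i\<ge>n. c i = 0) \<and>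
      (\<exists>f. word_poly n c = ((\<Prod>\<beta>\<in>Z. [:-\<beta>, 1:]) * f) mod xn1 n)}"

definition dual_code :: "nat \<Rightarrow> (nat \<Rightarrow> 'a::field) set \<Rightarrow> (nat \<Rightarrow> 'a) set" where
  "dual_code n C = {y. (\<forall>i\<ge>n. y i = 0) \<and> (\<forall>c\<in>C. (\<Sum>i<n. c i * y i) = 0)}"

definition wt :: "nat set \<Rightarrow> (nat \<Rightarrow> 'a::zero) \<Rightarrow> nat" where
  "wt I c = card {i\<in>I. c i \<noteq> 0}"

definition min_dist :: "nat set \<Rightarrow> (nat \<Rightarrow> 'a::zero) set \<Rightarrow> nat" where
  "min_dist I C = Inf {wt I c | c. c \<in> C \<and> wt I c \<noteq> 0}"

definition puncture :: "nat set \<Rightarrow> (nat \<Rightarrow> 'a::zero) set \<Rightarrow> (nat \<Rightarrow> 'a) set" where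
  "puncture S C = (\<lambda>c i. if i \<in> S then c i else 0) ` C"

definition has_locality :: "nat \<Rightarrow> (nat \<Rightarrow> 'a::zero) set \<Rightarrow> nat \<Rightarrow> nat \<Rightarrow> nat \<Rightarrow> bool" where
  "has_locality n C r \<delta> i \<longleftrightarrow> (\<exists>S. S \<subseteq> {..<n} \<and> i \<in> S \<and> card S \<le> r + \<delta> - 1 \<and>
      min_dist S (puncture S C) \<ge> \<delta>)"

definition is_LRC :: "nat \<Rightarrow> (nat \<Rightarrow> 'a::zero) set \<Rightarrow> nat \<Rightarrow> nat \<Rightarrow> bool" where
  "is_LRC n C r \<delta> \<longleftrightarrow> r \<ge> 1 \<and> \<delta> \<ge> 2 \<and> (\<forall>i<n. has_locality n C r \<delta> i)"

definition code_dim :: "(nat \<Rightarrow> 'a::field) set \<Rightarrow> nat" where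
  "code_dim C = vector_space.dim (\<lambda>a v i. a * v i) C"

definition is_optimal_LRC :: "nat \<Rightarrow> (nat \<Rightarrow> 'a::field) set \<Rightarrow> nat \<Rightarrow> nat \<Rightarrow> bool" where
  "is_optimal_LRC n C r \<delta> \<longleftrightarrow> is_LRC n C r \<delta> \<and>
     int (min_dist {..<n} C) = int n - int (code_dim C)
        - (\<lceil>real (code_dim C) / real r\<rceil> - 1) * (int \<delta> - 1) + 1"

definition set_prod :: "'a::times set \<Rightarrow> 'a set \<Rightarrow> 'a set" where
  "set_prod A B = {x * y | x y. x \<in> A \<and> y \<in> B}"

end

theory Submission
  imports Defs
begin

text \<open>The defining set of \<open>C_AB\<close> is \<open>{\<alpha>^(t + e b)}\<close> with \<open>e\<close> ranging over
  \<open>E = {0, \<dots>, m + \<delta> - 3} \<union> {i_l + c | 1 \<le> l \<le> s, 0 \<le> c \<le> \<delta> - 2}\<close>, a disjoint union of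
  size \<open>m + \<delta> - 2 + s (\<delta> - 1)\<close>; this gives the dimension, and the initial run of
  \<open>m + \<delta> - 2\<close> consecutive exponents gives minimum distance at least \<open>m + \<delta> - 1\<close> by the BCH bound.
  For locality, \<open>\<beta> \<omega>^j \<in> AB\<close> for all \<open>\<beta> \<in> A\<close> and \<open>j < \<delta> - 1\<close> (\<open>\<omega> = \<alpha>^b\<close>), so for a dual
  codeword \<open>y\<close> of \<open>C_A\<close> and \<open>x \<in> C_AB\<close> the products \<open>x_i y_i\<close> have \<open>\<delta> - 1\<close> vanishing power
  sums in the distinct points \<open>\<omega>^i\<close>: on the support of \<open>y\<close>, \<open>x\<close> is zero or has weight at least \<open>\<delta>\<close>.
  Rotations of a minimum-weight dual codeword, whose weight \<open>d\<^sup>\<bottom>\<close> is at least \<open>\<delta>\<close> by the BCH bound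
  again, therefore provide repair groups of size \<open>r + \<delta> - 1\<close> for every coordinate. Finally, if
  \<open>\<lceil>k / r\<rceil> = s + 1\<close>, the greedy shortening argument behind the Singleton-type bound for LRCs produces
  a nonzero codeword of weight at most \<open>m + \<delta> - 1\<close>, so that bound is attained.\<close>

section \<open>Cyclic codes as evaluation codes\<close>

definition words :: "nat \<Rightarrow> (nat \<Rightarrow> 'a::zero) set" where
  "words n = {c. \<forall>i\<ge>n. c i = 0}"

definition word_eval :: "nat \<Rightarrow> (nat \<Rightarrow> 'a::field) \<Rightarrow> 'a \<Rightarrow> 'a" where
  "word_eval n c z = (\<Sum>i<n. c i * z ^ i)"

definition gen_poly :: "'a::field set \<Rightarrow> 'a poly" where
  "gen_poly Z = (\<Prod>\<beta>\<in>Z. [:-\<beta>, 1:])"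

lemma coeff_word_poly: "coeff (word_poly n c) k = (if k < n then c k else 0)"
  unfolding word_poly_def by (simp add: coeff_sum)

lemma poly_word_poly: "poly (word_poly n c) z = word_eval n c z"
  unfolding word_poly_def word_eval_def by (simp add: poly_sum poly_monom)

lemma degree_word_poly_less: "n > 0 \<Longrightarrow> degree (word_poly n c) < n"
  using degree_le[of "n - 1" "word_poly n c"] by (force simp: coeff_word_poly)

lemma word_poly_coeff:
  assumes "degree p < n"
  shows "word_poly n (coeff p) = p"
  using assms by (intro poly_eqI) (auto simp: coeff_word_poly coeff_eq_0)

lemma degree_xn1: "n > 0 \<Longrightarrow> degree (xn1 n :: 'a::field poly) = n"
proof -
  assume "n > 0"
  have "xn1 n = monom (1::'a) n + (- 1)"
    by (simp add: xn1_def)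
  also have "degree \<dots> = n"
    using \<open>n > 0\<close> by (subst degree_add_eq_left) (auto simp: degree_monom_eq)
  finally show ?thesis .
qed

lemma poly_gen_poly_eq_0: "finite Z \<Longrightarrow> poly (gen_poly Z) z = 0 \<longleftrightarrow> z \<in> Z"
  by (auto simp: gen_poly_def poly_prod)

lemma degree_gen_poly: "finite Z \<Longrightarrow> degree (gen_poly Z) = card Z"
  unfolding gen_poly_def by (subst degree_prod_sum_eq) auto

lemma gen_poly_nonzero: "gen_poly Z \<noteq> 0"
  unfolding gen_poly_def by (cases "finite Z") auto

lemma gen_poly_dvd:
  assumes "finite Z" "\<forall>z\<in>Z. poly p z = 0"
  shows "gen_poly Z dvd p"
  using assms
proof (induction Z rule: finite_induct)
  case empty
  then show ?case by (simp add: gen_poly_def)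
next
  case (insert x F)
  then obtain q where q: "p = gen_poly F * q"
    by (auto elim: dvdE)
  have "poly q x = 0"
    using insert q by (auto simp: poly_gen_poly_eq_0)
  then obtain q' where "q = [:-x, 1:] * q'"
    by (auto simp: poly_eq_0_iff_dvd elim: dvdE)
  moreover have "gen_poly (insert x F) = [:-x, 1:] * gen_poly F"
    using insert(1,2) by (simp add: gen_poly_def)
  ultimately have "p = gen_poly (insert x F) * q'"
    using q by (simp only: mult_ac)
  then show ?case ..
qed

lemma cyclic_code_iff:
  fixes Z :: "'a::{field,finite} set"
  assumes "n > 0" and "\<forall>z\<in>Z. z ^ n = 1"
  shows "c \<in> cyclic_code n Z \<longleftrightarrow> c \<in> words n \<and> (\<forall>z\<in>Z. word_eval n c z = 0)"
proof
  assume "c \<in> cyclic_code n Z"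
  then obtain f where c: "c \<in> words n" "word_poly n c = (gen_poly Z * f) mod xn1 n"
    by (auto simp: cyclic_code_def words_def gen_poly_def)
  then have "word_poly n c = gen_poly Z * f - xn1 n * ((gen_poly Z * f) div xn1 n)"
    by (simp add: minus_div_mult_eq_mod[symmetric] mult_ac)
  then show "c \<in> words n \<and> (\<forall>z\<in>Z. word_eval n c z = 0)"
    using c(1) assms(2)
    by (auto simp: poly_word_poly[symmetric] poly_gen_poly_eq_0 xn1_def poly_monom)
next
  assume c: "c \<in> words n \<and> (\<forall>z\<in>Z. word_eval n c z = 0)"
  then obtain f where f: "word_poly n c = gen_poly Z * f"
    using gen_poly_dvd[of Z "word_poly n c"] by (auto simp: poly_word_poly elim: dvdE)
  have "word_poly n c mod xn1 n = word_poly n c"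
    using assms(1) by (intro mod_poly_less) (simp add: degree_xn1 degree_word_poly_less)
  with f have "word_poly n c = (gen_poly Z * f) mod xn1 n"
    by simp
  then show "c \<in> cyclic_code n Z"
    using c unfolding cyclic_code_def words_def gen_poly_def by blast
qed

section \<open>Dimension of a cyclic code\<close>

interpretation vs: vector_space "\<lambda>(a::'a::field) (v::nat \<Rightarrow> 'a) i. a * v i"
  by unfold_locales (auto simp: algebra_simps fun_eq_iff)

lemma sum_apply: "(\<Sum>j\<in>J. f j) x = (\<Sum>j\<in>J. f j x)"
  by (induction J rule: infinite_finite_induct) auto

lemma cyclic_code_subset_words:
  fixes Z :: "'a::{field,finite} set"
  assumes "n > 0" and "\<forall>z\<in>Z. z ^ n = 1"
  shows "cyclic_code n Z \<subseteq> words n"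
  using cyclic_code_iff[OF assms] by auto

lemma cyclic_code_subspace:
  fixes Z :: "'a::{field,finite} set"
  assumes "n > 0" and "\<forall>z\<in>Z. z ^ n = 1"
  shows "vs.subspace (cyclic_code n Z)"
  by (auto simp: vs.subspace_def cyclic_code_iff[OF assms] words_def word_eval_def
      distrib_right sum.distrib sum_distrib_left[symmetric] mult.assoc)

definition shifted_gen :: "'a::field set \<Rightarrow> nat \<Rightarrow> nat \<Rightarrow> 'a" where
  "shifted_gen Z j = coeff (monom 1 j * gen_poly Z)"

lemma shifted_gen_combination:
  "(\<Sum>j\<in>J. (\<lambda>i. u j * shifted_gen Z j i)) = coeff ((\<Sum>j\<in>J. monom (u j) j) * gen_poly Z)"
proof -
  have "coeff (monom (u j) j * gen_poly Z) i = u j * shifted_gen Z j i" for j i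
    unfolding shifted_gen_def by (metis coeff_smult mult.right_neutral mult_smult_left smult_monom)
  then show ?thesis
    by (simp add: fun_eq_iff sum_apply coeff_sum sum_distrib_right)
qed

lemma inj_shifted_gen: "inj (shifted_gen Z)"
proof (rule injI)
  fix j j' assume "shifted_gen Z j = shifted_gen Z j'"
  then have "monom 1 j * gen_poly Z = monom 1 j' * gen_poly Z"
    by (simp add: shifted_gen_def poly_eq_iff)
  then show "j = j'"
    using gen_poly_nonzero[of Z] by (simp add: monom_eq_iff')
qed

lemma shifted_gen_in_cyclic_code:
  fixes Z :: "'a::{field,finite} set"
  assumes "n > 0" and "j < n - card Z"
  shows "shifted_gen Z j \<in> cyclic_code n Z"
proof -
  have "degree (monom 1 j * gen_poly Z) = j + card Z"
    using gen_poly_nonzero[of Z] by (simp add: degree_mult_eq degree_monom_eq degree_gen_poly)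
  then have deg: "degree (monom 1 j * gen_poly Z) < n"
    using assms(2) by simp
  then have "word_poly n (shifted_gen Z j) = (gen_poly Z * monom 1 j) mod xn1 n"
    using assms(1) by (simp add: shifted_gen_def word_poly_coeff mod_poly_less degree_xn1 mult.commute)
  moreover have "shifted_gen Z j \<in> words n"
    using deg by (auto simp: shifted_gen_def words_def coeff_eq_0)
  ultimately show ?thesis
    unfolding cyclic_code_def words_def gen_poly_def by blast
qed

lemma cyclic_code_subset_span_shifted_gens:
  fixes Z :: "'a::{field,finite} set"
  assumes n: "n > 0" and Z: "\<forall>z\<in>Z. z ^ n = 1"
  shows "cyclic_code n Z \<subseteq> vs.span (shifted_gen Z ` {..<n - card Z})"
proof
  fix c assume c: "c \<in> cyclic_code n Z"
  then have "gen_poly Z dvd word_poly n c"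
    by (intro gen_poly_dvd) (auto simp: cyclic_code_iff[OF n Z] poly_word_poly)
  then obtain h where h: "word_poly n c = gen_poly Z * h"
    by (auto elim: dvdE)
  have "degree h < n - card Z \<or> h = 0"
    using degree_word_poly_less[OF n, of c] gen_poly_nonzero[of Z]
    by (auto simp: h degree_mult_eq degree_gen_poly)
  then have "(\<Sum>j<n - card Z. monom (coeff h j) j) = h"
    using word_poly_coeff[of h "n - card Z"] by (auto simp: word_poly_def)
  moreover have "c = coeff (word_poly n c)"
    using c by (auto simp: fun_eq_iff coeff_word_poly cyclic_code_iff[OF n Z] words_def)
  ultimately have "c = (\<Sum>j<n - card Z. (\<lambda>i. coeff h j * shifted_gen Z j i))"
    by (simp add: shifted_gen_combination h mult.commute)
  also have "\<dots> \<in> vs.span (shifted_gen Z ` {..<n - card Z})"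
    by (intro vs.span_sum vs.span_scale vs.span_base) auto
  finally show "c \<in> vs.span (shifted_gen Z ` {..<n - card Z})" .
qed

lemma independent_shifted_gens: "vs.independent (shifted_gen Z ` J)"
  unfolding vs.independent_explicit_module
proof (intro allI impI)
  fix T u v assume "T \<subseteq> shifted_gen Z ` J" and "finite T"
    and u: "(\<Sum>v\<in>T. (\<lambda>i. u v * v i)) = 0" and "v \<in> T"
  then obtain J' where J': "J' \<subseteq> J" "T = shifted_gen Z ` J'"
    by (auto simp: subset_image_iff)
  then have "finite J'"
    using \<open>finite T\<close> finite_image_iff[OF inj_on_subset[OF inj_shifted_gen]] by blast
  obtain j where j: "j \<in> J'" "v = shifted_gen Z j"
    using \<open>v \<in> T\<close> J'(2) by auto
  define p where "p = (\<Sum>j\<in>J'. monom (u (shifted_gen Z j)) j)"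
  have "coeff (p * gen_poly Z) = 0"
    using u unfolding J'(2) p_def shifted_gen_combination[symmetric]
    by (simp add: sum.reindex inj_on_subset[OF inj_shifted_gen])
  then have "p * gen_poly Z = 0"
    by (simp add: poly_eq_iff fun_eq_iff)
  then have "p = 0"
    using gen_poly_nonzero[of Z] by simp
  moreover have "coeff p j = u v"
    unfolding p_def coeff_sum coeff_monom using j \<open>finite J'\<close> by (simp add: sum.delta)
  ultimately show "u v = 0"
    by simp
qed

lemma dim_cyclic_code:
  fixes Z :: "'a::{field,finite} set"
  assumes "n > 0" and "\<forall>z\<in>Z. z ^ n = 1"
  shows "vs.dim (cyclic_code n Z) = n - card Z"
proof (rule vs.dim_unique)
  show "shifted_gen Z ` {..<n - card Z} \<subseteq> cyclic_code n Z"
    using shifted_gen_in_cyclic_code[OF assms(1)] by blast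
  show "card (shifted_gen Z ` {..<n - card Z}) = n - card Z"
    by (simp add: card_image inj_on_subset[OF inj_shifted_gen])
qed (use assms in \<open>simp_all add: cyclic_code_subset_span_shifted_gens independent_shifted_gens\<close>)

section \<open>Primitive roots and the BCH bound\<close>

definition primitive_root :: "nat \<Rightarrow> 'a::field \<Rightarrow> bool" where
  "primitive_root n x \<longleftrightarrow> x ^ n = 1 \<and> (\<forall>j. 0 < j \<and> j < n \<longrightarrow> x ^ j \<noteq> 1)"

lemma root_of_unity_nonzero: "x ^ n = 1 \<Longrightarrow> n > 0 \<Longrightarrow> (x::'a::field) \<noteq> 0"
  by (auto simp: power_0_left)

lemma root_of_unity_power_mod: "x ^ n = (1::'a::field) \<Longrightarrow> x ^ (e mod n) = x ^ e"
  by (metis div_mult_mod_eq mult.commute power_add power_mult power_one mult_1)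

lemma primitive_root_power_eq_1_iff:
  assumes "n > 0" and "primitive_root n x"
  shows "x ^ e = 1 \<longleftrightarrow> n dvd e"
proof
  assume "x ^ e = 1"
  then have "x ^ (e mod n) = 1"
    using assms(2) by (simp add: primitive_root_def root_of_unity_power_mod)
  then show "n dvd e"
    using assms mod_less_divisor[OF assms(1), of e] unfolding primitive_root_def
    by (metis dvd_eq_mod_eq_0 neq0_conv)
next
  assume "n dvd e"
  then show "x ^ e = 1"
    using assms(2) by (auto simp: primitive_root_def power_mult)
qed

lemma primitive_root_power_inj:
  assumes "n > 0" and "primitive_root n x"
  shows "inj_on (\<lambda>i. x ^ i) {..<n}"
proof -
  have "i = j" if "i < n" "j < n" "x ^ i = x ^ j" "i \<le> j" for i j
  proof -
    have "x ^ i * x ^ (j - i) = x ^ i * 1"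
      using that by (metis le_add_diff_inverse mult_1_right power_add)
    then have "n dvd j - i"
      using assms root_of_unity_nonzero[of x n]
      by (simp add: primitive_root_def primitive_root_power_eq_1_iff[OF assms, symmetric])
    then show "i = j"
      using that by (auto dest: dvd_imp_le)
  qed
  then show ?thesis
    by (intro inj_onI) (metis lessThan_iff nle_le)
qed

lemma primitive_root_power_coprime:
  assumes "n > 0" and "primitive_root n x" and "coprime b n"
  shows "primitive_root n (x ^ b)"
  using assms primitive_root_power_eq_1_iff[OF assms(1,2)]
  by (auto simp: primitive_root_def power_mult[symmetric] coprime_dvd_mult_right_iff
      coprime_commute dest: dvd_imp_le)

lemma primitive_root_inverse: "primitive_root n x \<Longrightarrow> primitive_root n (inverse x)"
  by (auto simp: primitive_root_def power_inverse)

text \<open>Vandermonde argument: pair the sums with the coefficients of the polynomial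
  vanishing exactly on \<open>z ` (W - {q})\<close>.\<close>

lemma vanishing_power_sums:
  fixes y z :: "nat \<Rightarrow> 'a::field"
  assumes "finite W" and "inj_on z W" and "card W \<le> e"
    and sums: "\<forall>j<e. (\<Sum>i\<in>W. y i * z i ^ j) = 0"
  shows "\<forall>i\<in>W. y i = 0"
proof
  fix q assume q: "q \<in> W"
  define P where "P = (\<Prod>i\<in>W - {q}. [:- z i, 1:])"
  have "degree P < e"
    using assms(1,3) q card_gt_0_iff[of W] unfolding P_def by (subst degree_prod_sum_eq) auto
  then have "(\<Sum>i\<in>W. y i * poly P (z i)) = (\<Sum>j\<le>degree P. coeff P j * (\<Sum>i\<in>W. y i * z i ^ j))"
    by (simp add: poly_altdef sum_distrib_left sum.swap[of _ W] mult_ac)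
  also have "\<dots> = 0"
    using sums \<open>degree P < e\<close> by simp
  finally have "(\<Sum>i\<in>W. y i * poly P (z i)) = 0" .
  moreover have "poly P (z i) = 0" if "i \<in> W - {q}" for i
    using that assms(1) by (auto simp: P_def poly_prod)
  ultimately have "y q * poly P (z q) = 0"
    using assms(1) q by (simp add: sum.remove)
  moreover have "poly P (z q) \<noteq> 0"
    using assms(1,2) q by (auto simp: P_def poly_prod inj_on_def)
  ultimately show "y q = 0"
    by simp
qed

lemma power_sums_weight_bound:
  fixes w :: "nat \<Rightarrow> 'a::field"
  assumes "n > 0" and "primitive_root n \<omega>"
    and sums: "\<forall>j<D. (\<Sum>i<n. w i * (\<omega> ^ j) ^ i) = 0" and "wt {..<n} w \<noteq> 0"
  shows "D < wt {..<n} w"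
proof (rule ccontr)
  define W where "W = {i\<in>{..<n}. w i \<noteq> 0}"
  assume "\<not> D < wt {..<n} w"
  then have "card W \<le> D"
    by (simp add: W_def wt_def)
  moreover have "inj_on (\<lambda>i. \<omega> ^ i) W"
    using primitive_root_power_inj[OF assms(1,2)] by (rule inj_on_subset) (auto simp: W_def)
  moreover have "(\<Sum>i\<in>W. w i * (\<omega> ^ i) ^ j) = (\<Sum>i<n. w i * (\<omega> ^ j) ^ i)" for j
    by (rule sum.mono_neutral_cong_left) (auto simp: W_def simp flip: power_mult mult.commute)
  ultimately have "\<forall>i\<in>W. w i = 0"
    using sums by (intro vanishing_power_sums[of W]) (auto simp: W_def)
  then show False
    using assms(4) by (simp add: W_def wt_def)
qed

lemma bch_bound:
  fixes y :: "nat \<Rightarrow> 'a::field"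
  assumes "n > 0" and "primitive_root n \<omega>" and "c \<noteq> 0"
    and "\<forall>e<D. word_eval n y (c * \<omega> ^ e) = 0" and "wt {..<n} y \<noteq> 0"
  shows "D < wt {..<n} y"
proof -
  have "wt {..<n} (\<lambda>i. y i * c ^ i) = wt {..<n} y"
    using assms(3) by (simp add: wt_def)
  moreover have "(\<Sum>i<n. y i * c ^ i * (\<omega> ^ e) ^ i) = word_eval n y (c * \<omega> ^ e)" for e
    by (simp add: word_eval_def power_mult_distrib mult.assoc)
  ultimately show ?thesis
    using power_sums_weight_bound[OF assms(1,2), of D "\<lambda>i. y i * c ^ i"] assms(4,5) by simp
qed

section \<open>Geometric words and rotations\<close>

definition geom_word :: "nat \<Rightarrow> 'a::field \<Rightarrow> nat \<Rightarrow> 'a" where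
  "geom_word n \<gamma> i = (if i < n then \<gamma> ^ i else 0)"

lemma wt_geom_word: "\<gamma> \<noteq> 0 \<Longrightarrow> wt S (geom_word n \<gamma>) = card (S \<inter> {..<n})"
  unfolding wt_def geom_word_def by (rule arg_cong[where f = card]) auto

lemma geom_word_in_dual_code:
  fixes Z :: "'a::{field,finite} set"
  assumes "n > 0" and "\<forall>z\<in>Z. z ^ n = 1" and "\<beta> \<in> Z"
  shows "geom_word n \<beta> \<in> dual_code n (cyclic_code n Z)"
  using assms by (auto simp: dual_code_def cyclic_code_iff geom_word_def word_eval_def)

text \<open>For \<open>z \<in> Z\<close> the ratio \<open>z / \<beta> \<noteq> 1\<close> is an \<open>n\<close>-th root of unity, so the geometric
  sum \<open>\<Sum>i<n. (z / \<beta>) ^ i\<close> vanishes.\<close>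

lemma geom_word_inverse_in_cyclic_code:
  fixes Z :: "'a::{field,finite} set"
  assumes n: "n > 0" and Z: "\<forall>z\<in>Z. z ^ n = 1" and "\<beta> ^ n = 1" and "\<beta> \<notin> Z"
  shows "geom_word n (inverse \<beta>) \<in> cyclic_code n Z"
  unfolding cyclic_code_iff[OF n Z]
proof (intro conjI ballI)
  fix z assume z: "z \<in> Z"
  have "\<beta> \<noteq> 0"
    using assms(3) n by (rule root_of_unity_nonzero)
  then have "inverse \<beta> * z \<noteq> 1"
    using z assms(4) by (auto simp: field_simps)
  then have "word_eval n (geom_word n (inverse \<beta>)) z = ((inverse \<beta> * z) ^ n - 1) / (inverse \<beta> * z - 1)"
    by (simp add: word_eval_def geom_word_def geometric_sum flip: power_mult_distrib)
  also have "\<dots> = 0"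
    using Z z assms(3) by (simp add: power_mult_distrib power_inverse)
  finally show "word_eval n (geom_word n (inverse \<beta>)) z = 0" .
qed (simp add: words_def geom_word_def)

definition rotate_word :: "nat \<Rightarrow> nat \<Rightarrow> (nat \<Rightarrow> 'a::zero) \<Rightarrow> nat \<Rightarrow> 'a" where
  "rotate_word n a c i = (if i < n then c ((i + a) mod n) else 0)"

lemma mod_add_complement:
  assumes "(n::nat) > 0"
  obtains a' where "(a + a') mod n = 0"
proof
  have "n * (a div n) + a mod n = a" and "a mod n < n"
    using assms by simp_all
  then have "a + (n - a mod n) = n * (a div n) + n"
    by linarith
  then show "(a + (n - a mod n)) mod n = 0"
    by simp
qed

lemma mod_add_inverse: "(a + a') mod (n::nat) = 0 \<Longrightarrow> i < n \<Longrightarrow> ((i + a) mod n + a') mod n = i"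
proof -
  assume "(a + a') mod n = 0" and "i < n"
  have "((i + a) mod n + a') mod n = (i + (a + a') mod n) mod n"
    by (simp add: mod_add_left_eq mod_add_right_eq add.assoc)
  then show ?thesis
    using \<open>(a + a') mod n = 0\<close> \<open>i < n\<close> by simp
qed

lemma bij_betw_rotate:
  assumes "(n::nat) > 0"
  shows "bij_betw (\<lambda>i. (i + a) mod n) {..<n} {..<n}"
proof -
  obtain a' where a': "(a + a') mod n = 0"
    using mod_add_complement[OF assms] .
  then have "(a' + a) mod n = 0"
    by (simp add: add.commute)
  with a' show ?thesis
    by (intro bij_betw_byWitness[where f' = "\<lambda>i. (i + a') mod n"]) (auto simp: mod_add_inverse)
qed

lemma sum_rotate: "(n::nat) > 0 \<Longrightarrow> (\<Sum>i<n. f ((i + a) mod n)) = (\<Sum>i<n. f i)"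
  by (rule sum.reindex_bij_betw[OF bij_betw_rotate])

lemma wt_rotate_word:
  assumes "(n::nat) > 0"
  shows "wt {..<n} (rotate_word n a c) = wt {..<n} c"
proof -
  let ?f = "\<lambda>i. (i + a) mod n" and ?A = "{i\<in>{..<n}. c ((i + a) mod n) \<noteq> 0}"
  have bij: "bij_betw ?f {..<n} {..<n}"
    using assms by (rule bij_betw_rotate)
  have image: "?f ` ?A = {i\<in>{..<n}. c i \<noteq> 0}"
  proof
    show "?f ` ?A \<subseteq> {i\<in>{..<n}. c i \<noteq> 0}"
      using assms by auto
    show "{i\<in>{..<n}. c i \<noteq> 0} \<subseteq> ?f ` ?A"
    proof
      fix j assume j: "j \<in> {i\<in>{..<n}. c i \<noteq> 0}"
      then obtain i where "i \<in> {..<n}" "j = ?f i"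
        using bij_betw_imp_surj_on[OF bij] by blast
      with j show "j \<in> ?f ` ?A"
        by (intro image_eqI[of _ _ i]) auto
    qed
  qed
  have "inj_on ?f ?A"
    using bij_betw_imp_inj_on[OF bij] by (rule inj_on_subset) auto
  then have "card ?A = wt {..<n} c"
    unfolding wt_def image[symmetric] by (rule card_image[symmetric])
  moreover have "{i\<in>{..<n}. rotate_word n a c i \<noteq> 0} = ?A"
    by (rule Collect_cong) (auto simp: rotate_word_def)
  ultimately show ?thesis
    by (simp add: wt_def)
qed

lemma rotate_in_cyclic_code:
  fixes Z :: "'a::{field,finite} set"
  assumes n: "n > 0" and Z: "\<forall>z\<in>Z. z ^ n = 1" and c: "c \<in> cyclic_code n Z"
  shows "rotate_word n a c \<in> cyclic_code n Z"
  unfolding cyclic_code_iff[OF n Z]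
proof (intro conjI ballI)
  fix z assume z: "z \<in> Z"
  then have "z ^ n = 1"
    using Z by blast
  then have "z ^ a * word_eval n (rotate_word n a c) z = (\<Sum>i<n. c ((i + a) mod n) * z ^ ((i + a) mod n))"
    by (simp add: word_eval_def rotate_word_def sum_distrib_left root_of_unity_power_mod power_add mult_ac)
  also have "\<dots> = word_eval n c z"
    unfolding word_eval_def by (rule sum_rotate[OF n])
  also have "\<dots> = 0"
    using c z cyclic_code_iff[OF n Z] by blast
  finally show "word_eval n (rotate_word n a c) z = 0"
    using root_of_unity_nonzero[OF \<open>z ^ n = 1\<close> n] by simp
qed (simp add: words_def rotate_word_def)

lemma rotate_in_dual_code:
  fixes Z :: "'a::{field,finite} set"
  assumes n: "n > 0" and Z: "\<forall>z\<in>Z. z ^ n = 1" and y: "y \<in> dual_code n (cyclic_code n Z)"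
  shows "rotate_word n a y \<in> dual_code n (cyclic_code n Z)"
  unfolding dual_code_def
proof (intro CollectI conjI allI impI ballI)
  fix c assume c: "c \<in> cyclic_code n Z"
  obtain a' where "(a + a') mod n = 0"
    using mod_add_complement[OF n] .
  define c' where "c' = rotate_word n a' c"
  from \<open>(a + a') mod n = 0\<close> have "(\<Sum>i<n. c i * rotate_word n a y i) = (\<Sum>i<n. c' ((i + a) mod n) * y ((i + a) mod n))"
    by (intro sum.cong) (simp_all add: c'_def rotate_word_def mod_add_inverse)
  also have "\<dots> = (\<Sum>i<n. c' i * y i)"
    using sum_rotate[OF n] .
  also have "\<dots> = 0"
    using y rotate_in_cyclic_code[OF n Z c] by (auto simp: dual_code_def c'_def)
  finally show "(\<Sum>i<n. c i * rotate_word n a y i) = 0" .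
qed (simp add: rotate_word_def)

section \<open>Locality from dual codewords\<close>

lemma wt_support_eq: "wt {i\<in>{..<n}. y i \<noteq> 0} x = wt {..<n} (\<lambda>i. x i * (y i :: 'a::field))"
  unfolding wt_def by (rule arg_cong[where f = card]) auto

text \<open>For \<open>j < D\<close> the word \<open>x_i \<omega>^(i j)\<close> lies in \<open>C_ZA\<close>, hence is orthogonal to \<open>y\<close>:
  the products \<open>x_i y_i\<close> have \<open>D\<close> vanishing power sums.\<close>

lemma dual_support_weight_bound:
  fixes ZA ZB :: "'a::{field,finite} set"
  assumes n: "n > 0" and "primitive_root n \<omega>"
    and ZA: "\<forall>z\<in>ZA. z ^ n = 1" and ZB: "\<forall>z\<in>ZB. z ^ n = 1"
    and shifts: "\<forall>\<beta>\<in>ZA. \<forall>j<D. \<beta> * \<omega> ^ j \<in> ZB"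
    and y: "y \<in> dual_code n (cyclic_code n ZA)" and x: "x \<in> cyclic_code n ZB"
    and "wt {i\<in>{..<n}. y i \<noteq> 0} x \<noteq> 0"
  shows "D < wt {i\<in>{..<n}. y i \<noteq> 0} x"
  unfolding wt_support_eq
proof (rule power_sums_weight_bound[OF n \<open>primitive_root n \<omega>\<close>])
  show "\<forall>j<D. (\<Sum>i<n. x i * y i * (\<omega> ^ j) ^ i) = 0"
  proof (intro allI impI)
    fix j assume "j < D"
    define x' where "x' i = x i * (\<omega> ^ j) ^ i" for i
    have "word_eval n x' \<beta> = word_eval n x (\<beta> * \<omega> ^ j)" for \<beta>
      by (simp add: word_eval_def x'_def power_mult_distrib mult_ac)
    then have "x' \<in> cyclic_code n ZA"
      using x shifts \<open>j < D\<close> by (auto simp: cyclic_code_iff[OF n ZA] cyclic_code_iff[OF n ZB] words_def x'_def)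
    then have "(\<Sum>i<n. x' i * y i) = 0"
      using y by (auto simp: dual_code_def)
    then show "(\<Sum>i<n. x i * y i * (\<omega> ^ j) ^ i) = 0"
      by (simp add: x'_def mult_ac)
  qed
next
  show "wt {..<n} (\<lambda>i. x i * y i) \<noteq> 0"
    using assms(8) unfolding wt_support_eq .
qed

lemma dual_codeword_repair_groups:
  fixes ZA ZB :: "'a::{field,finite} set"
  assumes n: "n > 0" and "primitive_root n \<omega>"
    and ZA: "\<forall>z\<in>ZA. z ^ n = 1" and ZB: "\<forall>z\<in>ZB. z ^ n = 1"
    and shifts: "\<forall>\<beta>\<in>ZA. \<forall>j<D. \<beta> * \<omega> ^ j \<in> ZB"
    and y: "y \<in> dual_code n (cyclic_code n ZA)" and "wt {..<n} y \<noteq> 0" and "j < n"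
  obtains S where "S \<subseteq> {..<n}" "j \<in> S" "card S = wt {..<n} y"
    "\<forall>x\<in>cyclic_code n ZB. wt S x \<noteq> 0 \<longrightarrow> D < wt S x"
proof -
  obtain i0 where i0: "i0 < n" "y i0 \<noteq> 0"
    using assms(7) by (auto simp: wt_def)
  define y' where "y' = rotate_word n (i0 + n - j) y"
  have "y' j = y i0"
    using \<open>j < n\<close> i0(1) by (simp add: y'_def rotate_word_def)
  moreover have "y' \<in> dual_code n (cyclic_code n ZA)"
    unfolding y'_def using n ZA y by (rule rotate_in_dual_code)
  moreover have "card {i\<in>{..<n}. y' i \<noteq> 0} = wt {..<n} y"
    using wt_rotate_word[OF n] by (simp add: y'_def wt_def)
  ultimately show ?thesis
    using that[of "{i\<in>{..<n}. y' i \<noteq> 0}"] \<open>j < n\<close> i0(2)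
      dual_support_weight_bound[OF n assms(2) ZA ZB shifts] by auto
qed

lemma wt_eq_0_iff: "c \<in> words n \<Longrightarrow> wt {..<n} c = 0 \<longleftrightarrow> c = 0"
  by (auto simp: wt_def words_def fun_eq_iff not_less[symmetric])

lemma min_dist_attained:
  assumes "c \<in> C" and "wt I c \<noteq> 0"
  obtains c' where "c' \<in> C" "wt I c' \<noteq> 0" "wt I c' = min_dist I C"
proof -
  have "min_dist I C \<in> {wt I c | c. c \<in> C \<and> wt I c \<noteq> 0}"
    unfolding min_dist_def using assms by (intro Inf_nat_def1) auto
  then show ?thesis
    using that by auto
qed

lemma min_dist_eqI:
  assumes "c \<in> C" and "wt I c \<noteq> 0" and "wt I c \<le> d"
    and "\<forall>x\<in>C. wt I x \<noteq> 0 \<longrightarrow> d \<le> wt I x"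
  shows "min_dist I C = d"
proof (rule antisym)
  show "min_dist I C \<le> d"
    unfolding min_dist_def using assms(1-3) by (intro cInf_lower2[of "wt I c"]) auto
  show "d \<le> min_dist I C"
    unfolding min_dist_def using assms by (intro cInf_greatest) auto
qed

definition repair_group :: "nat \<Rightarrow> (nat \<Rightarrow> 'a::zero) set \<Rightarrow> nat \<Rightarrow> nat \<Rightarrow> nat \<Rightarrow> nat set \<Rightarrow> bool" where
  "repair_group n C r \<delta> j S \<longleftrightarrow> S \<subseteq> {..<n} \<and> j \<in> S \<and> card S \<le> r + \<delta> - 1 \<and>
     (\<forall>x\<in>C. wt S x \<noteq> 0 \<longrightarrow> \<delta> \<le> wt S x)"

lemma wt_puncture: "wt S (\<lambda>i. if i \<in> S then c i else 0) = wt S c"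
  unfolding wt_def by (rule arg_cong[where f = card]) auto

lemma has_locality_if_repair_group:
  assumes "repair_group n C r \<delta> j S" and "\<exists>x\<in>C. wt S x \<noteq> 0"
  shows "has_locality n C r \<delta> j"
proof -
  have "\<delta> \<le> min_dist S (puncture S C)"
    unfolding min_dist_def puncture_def
  proof (rule cInf_greatest)
    show "{wt S c |c. c \<in> (\<lambda>c i. if i \<in> S then c i else 0) ` C \<and> wt S c \<noteq> 0} \<noteq> {}"
      using assms(2) by (auto simp: wt_puncture)
  qed (use assms(1) in \<open>auto simp: repair_group_def wt_puncture\<close>)
  then show ?thesis
    using assms(1) by (auto simp: has_locality_def repair_group_def)
qed

section \<open>A Singleton-type bound for locally repairable codes\<close>

definition unit_word :: "nat \<Rightarrow> nat \<Rightarrow> 'a::field" where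
  "unit_word j i = (if j = i then 1 else 0)"

lemma words_subset_span_unit_words: "words n \<subseteq> vs.span (unit_word ` {..<n})"
proof
  fix c :: "nat \<Rightarrow> 'a" assume "c \<in> words n"
  then have "c = (\<Sum>j<n. (\<lambda>i. c j * unit_word j i))"
    by (auto simp: fun_eq_iff sum_apply unit_word_def words_def not_less[symmetric]
        mult.commute[of "c _"] if_distrib[of "\<lambda>x. x * c _"] cong: if_cong)
  also have "\<dots> \<in> vs.span (unit_word ` {..<n})"
    by (intro vs.span_sum vs.span_scale vs.span_base) auto
  finally show "c \<in> vs.span (unit_word ` {..<n})" .
qed

lemma finite_independent_words: "vs.independent B \<Longrightarrow> B \<subseteq> words n \<Longrightarrow> finite B"
  using vs.independent_span_bound[of "unit_word ` {..<n}" B] words_subset_span_unit_words[of n] by auto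

lemma dim_ge_1_nonzero:
  assumes "1 \<le> vs.dim V"
  obtains v where "v \<in> V" "v \<noteq> 0"
proof -
  have "\<not> V \<subseteq> vs.span {}"
    using vs.dim_le_card[of V "{}"] assms by auto
  then show ?thesis
    using that vs.span_empty by auto
qed

lemma dim_le_dim_coordinate_zero:
  assumes "vs.subspace V" and "V \<subseteq> words n"
  shows "vs.dim V \<le> vs.dim {c\<in>V. c j = 0} + 1"
proof (cases "\<exists>v\<in>V. v j \<noteq> 0")
  case True
  then obtain v where v: "v \<in> V" "v j \<noteq> 0"
    by blast
  obtain B where B: "B \<subseteq> {c\<in>V. c j = 0}" "vs.independent B" "{c\<in>V. c j = 0} \<subseteq> vs.span B"
    "card B = vs.dim {c\<in>V. c j = 0}"
    using vs.basis_exists by blast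
  have "finite B"
    using B(1,2) assms(2) finite_independent_words by blast
  have "V \<subseteq> vs.span (insert v B)"
  proof
    fix w assume "w \<in> V"
    define w' where "w' = w - (\<lambda>i. w j / v j * v i)"
    have "w' \<in> V"
      unfolding w'_def using \<open>w \<in> V\<close> v assms(1) by (intro vs.subspace_diff vs.subspace_scale) auto
    moreover have "w' j = 0"
      using v(2) by (simp add: w'_def)
    ultimately have "w' \<in> vs.span B"
      using B(3) by blast
    then show "w \<in> vs.span (insert v B)"
      unfolding w'_def by (subst vs.span_breakdown_eq) blast
  qed
  then have "vs.dim V \<le> card (insert v B)"
    using \<open>finite B\<close> by (intro vs.dim_le_card) auto
  then show ?thesis
    using B(4) \<open>finite B\<close> by (simp add: card_insert_if split: if_splits)
next
  case False
  then have "{c\<in>V. c j = 0} = V"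
    by auto
  then show ?thesis
    by simp
qed

definition shorten :: "(nat \<Rightarrow> 'a::zero) set \<Rightarrow> nat set \<Rightarrow> (nat \<Rightarrow> 'a) set" where
  "shorten C U = {c\<in>C. \<forall>i\<in>U. c i = 0}"

lemma subspace_shorten: "vs.subspace C \<Longrightarrow> vs.subspace (shorten C U)"
  unfolding shorten_def vs.subspace_def by auto

lemma dim_shorten_union:
  assumes "vs.subspace C" and "C \<subseteq> words n" and "finite P"
  shows "vs.dim (shorten C U) \<le> vs.dim (shorten C (U \<union> P)) + card P"
  using assms(3)
proof (induction P rule: finite_induct)
  case (insert j P)
  have "vs.dim (shorten C (U \<union> P)) \<le> vs.dim {c\<in>shorten C (U \<union> P). c j = 0} + 1"
    using assms(1,2) by (intro dim_le_dim_coordinate_zero subspace_shorten) (auto simp: shorten_def)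
  also have "{c\<in>shorten C (U \<union> P). c j = 0} = shorten C (U \<union> insert j P)"
    by (auto simp: shorten_def)
  finally show ?case
    using insert by simp
qed simp

lemma repair_group_vanishes:
  assumes "repair_group n C r \<delta> j S" and "x \<in> C" and "card {i\<in>S. x i \<noteq> 0} < \<delta>"
  shows "\<forall>i\<in>S. x i = 0"
proof -
  have "finite S"
    using assms(1) finite_subset by (auto simp: repair_group_def)
  moreover have "wt S x = 0"
    using assms by (fastforce simp: repair_group_def wt_def)
  ultimately show ?thesis
    by (auto simp: wt_def)
qed

lemma repair_group_meets_complement:
  assumes S: "repair_group n C r \<delta> j S" and c: "c \<in> shorten C U" "c j \<noteq> 0"
  shows "\<delta> \<le> card (S - U)"
proof -
  have "finite S" "j \<in> S" "c \<in> C"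
    using S c(1) finite_subset by (auto simp: repair_group_def shorten_def)
  then have "\<not> card {i\<in>S. c i \<noteq> 0} < \<delta>"
    using repair_group_vanishes[OF S] c(2) by blast
  then have "\<delta> \<le> card {i\<in>S. c i \<noteq> 0}"
    by simp
  also have "\<dots> \<le> card (S - U)"
    using c(1) \<open>finite S\<close> by (intro card_mono) (auto simp: shorten_def)
  finally show ?thesis .
qed

lemma shorten_repair_group:
  assumes S: "repair_group n C r \<delta> j S" and "P \<subseteq> S - U" and "card (S - U - P) < \<delta>"
  shows "shorten C (U \<union> P) = shorten C (U \<union> S)"
proof
  show "shorten C (U \<union> P) \<subseteq> shorten C (U \<union> S)"
  proof
    fix x assume x: "x \<in> shorten C (U \<union> P)"
    have "finite S"
      using S finite_subset by (auto simp: repair_group_def)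
    then have "card {i\<in>S. x i \<noteq> 0} \<le> card (S - U - P)"
      using x by (intro card_mono) (auto simp: shorten_def)
    then have "card {i\<in>S. x i \<noteq> 0} < \<delta>"
      using assms(3) by linarith
    moreover have "x \<in> C"
      using x by (simp add: shorten_def)
    ultimately have "\<forall>i\<in>S. x i = 0"
      using repair_group_vanishes[OF S] by blast
    then show "x \<in> shorten C (U \<union> S)"
      using x by (auto simp: shorten_def)
  qed
  show "shorten C (U \<union> S) \<subseteq> shorten C (U \<union> P)"
    using assms(2) by (auto simp: shorten_def)
qed

text \<open>One greedy step of the Singleton-type bound for LRCs: a codeword vanishing on \<open>U\<close> but
  not on \<open>j\<close> forces the repair group \<open>S\<close> of \<open>j\<close> to meet the complement of \<open>U\<close> in at least
  \<open>\<delta>\<close> points, and vanishing on all but \<open>\<delta> - 1\<close> of them forces vanishing on the whole of \<open>S\<close>.\<close>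

lemma lrc_greedy_step:
  assumes C: "vs.subspace C" "C \<subseteq> words n"
    and groups: "\<forall>j<n. \<exists>S. repair_group n C r \<delta> j S" and "\<delta> \<ge> 1"
    and U: "U \<subseteq> {..<n}" and "1 \<le> vs.dim (shorten C U)"
  obtains U' p where "U' \<subseteq> {..<n}" "p \<le> r" "card U' = card U + p + (\<delta> - 1)"
    "vs.dim (shorten C U) \<le> vs.dim (shorten C U') + p"
proof -
  obtain c where c: "c \<in> shorten C U" "c \<noteq> 0"
    using dim_ge_1_nonzero[OF \<open>1 \<le> vs.dim (shorten C U)\<close>] .
  then obtain j where j: "c j \<noteq> 0"
    by (auto simp: fun_eq_iff)
  then have "j < n"
    using c(1) C(2) by (auto simp: shorten_def words_def not_less[symmetric])
  then obtain S where S: "repair_group n C r \<delta> j S"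
    using groups by blast
  have fin: "finite S" "finite U"
    using S U finite_subset by (auto simp: repair_group_def)
  have "\<delta> \<le> card (S - U)"
    using S c(1) j by (rule repair_group_meets_complement)
  then obtain P where P: "P \<subseteq> S - U" "card P = card (S - U) - (\<delta> - 1)"
    using obtain_subset_with_card_n[of "card (S - U) - (\<delta> - 1)" "S - U"] by auto
  have "finite P"
    using P(1) fin finite_subset by blast
  have "card (S - U - P) < \<delta>"
    using P fin \<open>finite P\<close> \<open>\<delta> \<le> card (S - U)\<close> \<open>\<delta> \<ge> 1\<close> by (simp add: card_Diff_subset)
  with S P(1) have "shorten C (U \<union> P) = shorten C (U \<union> S)"
    by (rule shorten_repair_group)
  then have "vs.dim (shorten C U) \<le> vs.dim (shorten C (U \<union> S)) + card P"
    using dim_shorten_union[OF C \<open>finite P\<close>, of U] by simp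
  moreover have "card (U \<union> S) = card U + card P + (\<delta> - 1)"
    using fin P(2) \<open>\<delta> \<le> card (S - U)\<close> card_Un_disjoint[of U "S - U"] by (simp add: Un_Diff_cancel)
  moreover have "card P \<le> r"
    using P(2) S card_mono[OF fin(1), of "S - U"] by (auto simp: repair_group_def)
  moreover have "U \<union> S \<subseteq> {..<n}"
    using U S by (auto simp: repair_group_def)
  ultimately show ?thesis
    using that by blast
qed

lemma lrc_greedy:
  assumes C: "vs.subspace C" "C \<subseteq> words n"
    and groups: "\<forall>j<n. \<exists>S. repair_group n C r \<delta> j S" and "\<delta> \<ge> 1"
    and "l * r < vs.dim C"
  shows "\<exists>U p. U \<subseteq> {..<n} \<and> p \<le> l * r \<and> card U = p + l * (\<delta> - 1) \<and>
    vs.dim C \<le> vs.dim (shorten C U) + p"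
  using assms(5)
proof (induction l)
  case 0
  show ?case
    by (rule exI[of _ "{}"], rule exI[of _ 0]) (simp add: shorten_def)
next
  case (Suc l)
  then obtain U p where U: "U \<subseteq> {..<n}" "p \<le> l * r" "card U = p + l * (\<delta> - 1)"
    "vs.dim C \<le> vs.dim (shorten C U) + p"
    by auto
  have "1 \<le> vs.dim (shorten C U)"
    using U(2,4) Suc.prems by simp
  then obtain U' p' where "U' \<subseteq> {..<n}" "p' \<le> r" "card U' = card U + p' + (\<delta> - 1)"
    "vs.dim (shorten C U) \<le> vs.dim (shorten C U') + p'"
    using lrc_greedy_step[OF C groups \<open>\<delta> \<ge> 1\<close> U(1)] by blast
  then show ?case
    using U by (intro exI[of _ U'] exI[of _ "p + p'"]) simp
qed

lemma lrc_singleton_bound: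
  assumes C: "vs.subspace C" "C \<subseteq> words n"
    and groups: "\<forall>j<n. \<exists>S. repair_group n C r \<delta> j S" and "\<delta> \<ge> 1"
    and "s * r < vs.dim C" and "vs.dim C - 1 + s * (\<delta> - 1) \<le> n"
  obtains c where "c \<in> C" "c \<noteq> 0" "wt {..<n} c \<le> n - (vs.dim C - 1 + s * (\<delta> - 1))"
proof -
  let ?k = "vs.dim C"
  obtain U p where U: "U \<subseteq> {..<n}" "p \<le> s * r" "card U = p + s * (\<delta> - 1)"
    "?k \<le> vs.dim (shorten C U) + p"
    using lrc_greedy[OF C groups \<open>\<delta> \<ge> 1\<close> \<open>s * r < ?k\<close>] by blast
  have "finite U"
    using U(1) finite_subset by blast
  then have "?k - 1 - p \<le> card ({..<n} - U)"
    using U assms(5,6) by (simp add: card_Diff_subset)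
  then obtain E where E: "E \<subseteq> {..<n} - U" "card E = ?k - 1 - p"
    using obtain_subset_with_card_n by metis
  have "finite E"
    using E(1) finite_subset by blast
  have "vs.dim (shorten C U) \<le> vs.dim (shorten C (U \<union> E)) + card E"
    using C \<open>finite E\<close> by (rule dim_shorten_union)
  then have "1 \<le> vs.dim (shorten C (U \<union> E))"
    using U(2,4) E(2) assms(5) by linarith
  then obtain c where c: "c \<in> shorten C (U \<union> E)" "c \<noteq> 0"
    by (rule dim_ge_1_nonzero)
  have "{i\<in>{..<n}. c i \<noteq> 0} \<subseteq> {..<n} - (U \<union> E)"
    using c(1) by (auto simp: shorten_def)
  then have "wt {..<n} c \<le> card ({..<n} - (U \<union> E))"
    unfolding wt_def by (intro card_mono) auto
  also have "\<dots> = n - card (U \<union> E)"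
    using U(1) E(1) \<open>finite U\<close> \<open>finite E\<close> by (subst card_Diff_subset) auto
  also have "card (U \<union> E) = card U + card E"
    using E(1) \<open>finite U\<close> \<open>finite E\<close> by (subst card_Un_disjoint) auto
  finally show ?thesis
    using that c U(3) E(2) assms(5) by (auto simp: shorten_def)
qed

section \<open>The construction\<close>

locale lrc_construction =
  fixes \<alpha> :: "'a::{field,finite}" and n \<delta> b s m t :: nat and i :: "nat \<Rightarrow> nat"
  assumes primitive: "primitive_root n \<alpha>"
    and \<delta>: "\<delta> \<ge> 2" and s: "s \<ge> 1" and m: "m \<ge> 1" and coprime: "coprime b n"
    and first: "m - 1 + \<delta> \<le> i 1" and last: "i s + \<delta> \<le> n"
    and gaps: "\<forall>l. 1 \<le> l \<and> l < s \<longrightarrow> i l + \<delta> \<le> i (l + 1)"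
begin

lemma n_pos: "n > 0"
  using last \<delta> by linarith

definition \<omega> :: 'a where
  "\<omega> = \<alpha> ^ b"

definition root_at :: "nat \<Rightarrow> 'a" where
  "root_at e = \<alpha> ^ t * \<omega> ^ e"

lemma primitive_\<omega>: "primitive_root n \<omega>"
  unfolding \<omega>_def using n_pos primitive coprime by (rule primitive_root_power_coprime)

lemma \<omega>_power_n: "\<omega> ^ n = 1"
  using primitive_\<omega> by (simp add: primitive_root_def)

lemma root_at_power_n: "root_at e ^ n = 1"
proof -
  have "root_at e ^ n = (\<alpha> ^ n) ^ t * (\<omega> ^ n) ^ e"
    by (simp add: root_at_def power_mult_distrib flip: power_mult add: mult.commute)
  then show ?thesis
    using primitive \<omega>_power_n by (simp add: primitive_root_def)
qed

lemma root_at_nonzero: "root_at e \<noteq> 0"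
  using root_at_power_n n_pos by (rule root_of_unity_nonzero)

lemma root_at_add: "root_at (e + c) = root_at e * \<omega> ^ c"
  by (simp add: root_at_def power_add mult.assoc)

lemma root_at_inj: "inj_on root_at {..<n}"
  using primitive_root_power_inj[OF n_pos primitive_\<omega>] primitive n_pos
  by (auto simp: inj_on_def root_at_def primitive_root_def power_0_left)

lemma i_gap: "1 \<le> l \<Longrightarrow> l < l' \<Longrightarrow> l' \<le> s \<Longrightarrow> i l + \<delta> \<le> i l'"
proof (induction l')
  case (Suc l')
  then have "i l' + \<delta> \<le> i (Suc l')"
    using gaps by simp
  moreover have "i l + \<delta> \<le> i l'" if "l \<noteq> l'"
    using Suc that by simp
  ultimately show ?case
    using Suc.prems by (cases "l = l'") simp_all
qed simp

lemma i_bounds: "1 \<le> l \<Longrightarrow> l \<le> s \<Longrightarrow> m - 1 + \<delta> \<le> i l \<and> i l + \<delta> \<le> n"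
  using i_gap[of 1 l] i_gap[of l s] first last by (cases "l = 1"; cases "l = s") auto

definition A_exps :: "nat set" where
  "A_exps = {..<m} \<union> i ` {1..s}"

definition AB_exps :: "nat set" where
  "AB_exps = {a + c | a c. a \<in> A_exps \<and> c \<le> \<delta> - 2}"

definition A :: "'a set" where
  "A = {\<alpha> ^ (t + j * b) | j. j < m} \<union> {\<alpha> ^ (t + i l * b) | l. 1 \<le> l \<and> l \<le> s}"

definition B :: "'a set" where
  "B = {\<alpha> ^ (j * b) | j. j \<le> \<delta> - 2}"

lemma \<alpha>_power_times_b: "\<alpha> ^ (e * b) = \<omega> ^ e"
  by (simp add: \<omega>_def power_mult[symmetric] mult.commute)

lemma A_eq: "A = root_at ` A_exps"
  by (auto simp: A_def A_exps_def root_at_def power_add \<alpha>_power_times_b)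

lemma B_eq: "B = (\<lambda>c. \<omega> ^ c) ` {..\<delta> - 2}"
  by (auto simp: B_def \<alpha>_power_times_b)

lemma set_prod_A_B: "set_prod A B = root_at ` AB_exps"
proof -
  have "set_prod A B = {root_at a * \<omega> ^ c | a c. a \<in> A_exps \<and> c \<le> \<delta> - 2}"
    unfolding set_prod_def A_eq B_eq by blast
  also have "\<dots> = root_at ` AB_exps"
    unfolding AB_exps_def root_at_add[symmetric] by blast
  finally show ?thesis .
qed

lemma A_exps_less: "e \<in> A_exps \<Longrightarrow> e < n"
  using i_bounds[of 1] i_bounds s \<delta> by (fastforce simp: A_exps_def)

lemma AB_exps_decomp: "AB_exps = {..<m + \<delta> - 2} \<union> (\<lambda>(l, c). i l + c) ` ({1..s} \<times> {..\<delta> - 2})"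
proof (intro equalityI subsetI)
  fix e assume "e \<in> AB_exps"
  then show "e \<in> {..<m + \<delta> - 2} \<union> (\<lambda>(l, c). i l + c) ` ({1..s} \<times> {..\<delta> - 2})"
    using \<delta> by (auto simp: AB_exps_def A_exps_def)
next
  fix e assume "e \<in> {..<m + \<delta> - 2} \<union> (\<lambda>(l, c). i l + c) ` ({1..s} \<times> {..\<delta> - 2})"
  then consider "e < m + \<delta> - 2" | l c where "l \<in> {1..s}" "c \<le> \<delta> - 2" "e = i l + c"
    by auto
  then show "e \<in> AB_exps"
  proof cases
    case 1
    then have "min e (m - 1) \<in> A_exps" "e - min e (m - 1) \<le> \<delta> - 2" "e = min e (m - 1) + (e - min e (m - 1))"
      using m by (auto simp: A_exps_def)
    then show ?thesis
      unfolding AB_exps_def by blast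
  next
    case 2
    then have "i l \<in> A_exps"
      by (simp add: A_exps_def)
    then show ?thesis
      using 2 unfolding AB_exps_def by blast
  qed
qed

lemma AB_exps_less: "e \<in> AB_exps \<Longrightarrow> e < n - 1"
  using i_bounds[of 1] i_bounds s \<delta> by (fastforce simp: AB_exps_decomp)

lemma card_AB_exps: "card AB_exps = m + \<delta> - 2 + s * (\<delta> - 1)"
proof -
  let ?g = "\<lambda>(l, c). i l + c"
  have "inj_on ?g ({1..s} \<times> {..\<delta> - 2})"
  proof (rule inj_onI, clarify)
    fix l c l' c' assume l: "l \<in> {1..s}" "c \<le> \<delta> - 2" "l' \<in> {1..s}" "c' \<le> \<delta> - 2"
      and eq: "i l + c = i l' + c'"
    have False if "l < l'"
      using i_gap[of l l'] that l eq \<delta> by simp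
    moreover have False if "l' < l"
      using i_gap[of l' l] that l eq \<delta> by simp
    ultimately have "l = l'"
      by (meson linorder_neqE_nat)
    then show "l = l' \<and> c = c'"
      using eq by simp
  qed
  then have "card (?g ` ({1..s} \<times> {..\<delta> - 2})) = s * (\<delta> - 1)"
    using \<delta> by (simp add: card_image card_cartesian_product Suc_diff_le[symmetric] numeral_2_eq_2)
  moreover have "m + \<delta> - 2 \<le> i l + c" if "l \<in> {1..s}" for l c
    using i_bounds[of l] that m by auto
  then have "{..<m + \<delta> - 2} \<inter> ?g ` ({1..s} \<times> {..\<delta> - 2}) = {}"
    by (fastforce simp: not_less[symmetric])
  ultimately show ?thesis
    unfolding AB_exps_decomp by (simp add: card_Un_disjoint)
qed

lemma card_set_prod_A_B: "card (set_prod A B) = m + \<delta> - 2 + s * (\<delta> - 1)"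
proof -
  have "inj_on root_at AB_exps"
    using root_at_inj by (rule inj_on_subset) (auto dest: AB_exps_less)
  then show ?thesis
    by (simp add: set_prod_A_B card_image card_AB_exps)
qed

lemma roots_A: "\<forall>z\<in>A. z ^ n = 1"
  by (simp add: A_eq root_at_power_n)

lemma roots_A_B: "\<forall>z\<in>set_prod A B. z ^ n = 1"
  by (simp add: set_prod_A_B root_at_power_n)

lemma root_at_notin_A: "e < n \<Longrightarrow> e \<notin> A_exps \<Longrightarrow> root_at e \<notin> A"
  using inj_onD[OF root_at_inj] A_exps_less by (fastforce simp: A_eq)

lemma root_at_notin_set_prod_A_B: "e < n \<Longrightarrow> e \<notin> AB_exps \<Longrightarrow> root_at e \<notin> set_prod A B"
  using inj_onD[OF root_at_inj] AB_exps_less by (fastforce simp: set_prod_A_B)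

lemma A_shifts: "\<forall>\<beta>\<in>A. \<forall>j<\<delta> - 1. \<beta> * \<omega> ^ j \<in> set_prod A B"
proof (intro ballI allI impI)
  fix \<beta> j assume "\<beta> \<in> A" "j < \<delta> - 1"
  moreover from \<open>j < \<delta> - 1\<close> have "\<omega> ^ j \<in> B"
    by (simp add: B_eq)
  ultimately show "\<beta> * \<omega> ^ j \<in> set_prod A B"
    unfolding set_prod_def by blast
qed

definition C :: "(nat \<Rightarrow> 'a) set" where
  "C = cyclic_code n (set_prod A B)"

lemma card_AB_exps_le: "m + \<delta> - 2 + s * (\<delta> - 1) \<le> n - 1"
proof -
  have "card AB_exps \<le> card {..<n - 1}"
    using AB_exps_less by (intro card_mono) auto
  then show ?thesis
    by (simp add: card_AB_exps)
qed

lemma dim_C: "code_dim C = n - (m + \<delta> - 2 + s * (\<delta> - 1))"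
  unfolding C_def code_dim_def using dim_cyclic_code[OF n_pos roots_A_B] card_set_prod_A_B
  by simp

lemma dim_C_int: "int (code_dim C) = int n - int m + 1 - (int s + 1) * (int \<delta> - 1)"
proof -
  have "int (code_dim C) = int n - (int m + int \<delta> - 2 + int s * (int \<delta> - 1))"
    using dim_C card_AB_exps_le \<delta> by (simp add: of_nat_diff)
  then show ?thesis
    by (simp add: algebra_simps)
qed

lemma full_weight_codeword: "geom_word n (inverse (root_at (n - 1))) \<in> C"
proof -
  have "n - 1 \<notin> AB_exps"
    using AB_exps_less by blast
  then have "root_at (n - 1) \<notin> set_prod A B"
    using n_pos by (intro root_at_notin_set_prod_A_B) auto
  then show ?thesis
    unfolding C_def using n_pos roots_A_B root_at_power_n by (rule geom_word_inverse_in_cyclic_code[rotated 3])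
qed

lemma C_weight_bound: "x \<in> C \<Longrightarrow> wt {..<n} x \<noteq> 0 \<Longrightarrow> m + \<delta> - 2 < wt {..<n} x"
proof (rule bch_bound[OF n_pos primitive_\<omega>])
  assume "x \<in> C"
  show "\<alpha> ^ t \<noteq> 0"
    using root_at_nonzero[of 0] by (simp add: root_at_def)
  have "root_at e \<in> set_prod A B" if "e < m + \<delta> - 2" for e
    using that by (auto simp: set_prod_A_B AB_exps_decomp)
  then show "\<forall>e<m + \<delta> - 2. word_eval n x (\<alpha> ^ t * \<omega> ^ e) = 0"
    using \<open>x \<in> C\<close> by (auto simp: C_def cyclic_code_iff[OF n_pos roots_A_B] root_at_def)
qed

text \<open>BCH bound for the dual: its codewords are orthogonal to the geometric words with
  ratio \<open>1 / root_at e\<close> for the \<open>\<delta> - 1\<close> consecutive exponents \<open>m \<le> e < m + \<delta> - 1\<close>,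
  none of which lies in \<open>A_exps\<close>.\<close>

lemma dual_weight_bound:
  assumes y: "y \<in> dual_code n (cyclic_code n A)" and "wt {..<n} y \<noteq> 0"
  shows "\<delta> - 1 < wt {..<n} y"
proof (rule bch_bound[OF n_pos primitive_root_inverse[OF primitive_\<omega>] _ _ assms(2)])
  show "inverse (root_at m) \<noteq> 0"
    by (simp add: root_at_nonzero)
  show "\<forall>e<\<delta> - 1. word_eval n y (inverse (root_at m) * inverse \<omega> ^ e) = 0"
  proof (intro allI impI)
    fix e assume "e < \<delta> - 1"
    then have "m + e < m - 1 + \<delta>"
      using m by linarith
    then have "m + e < i l" if "l \<in> {1..s}" for l
      using i_bounds[of l] that by auto
    then have "m + e < n" and "m + e \<notin> A_exps"
      using i_bounds[of 1] s by (fastforce simp: A_exps_def)+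
    then have "root_at (m + e) \<notin> A"
      by (rule root_at_notin_A)
    then have "geom_word n (inverse (root_at (m + e))) \<in> cyclic_code n A"
      using n_pos roots_A root_at_power_n by (rule geom_word_inverse_in_cyclic_code[rotated 3])
    then have "(\<Sum>i<n. geom_word n (inverse (root_at (m + e))) i * y i) = 0"
      using y by (auto simp: dual_code_def)
    then show "word_eval n y (inverse (root_at m) * inverse \<omega> ^ e) = 0"
      by (simp add: word_eval_def geom_word_def root_at_add power_inverse mult.commute)
  qed
qed

definition r :: nat where
  "r = min_dist {..<n} (dual_code n (cyclic_code n A)) + 1 - \<delta>"

lemma min_weight_dual_codeword:
  obtains y where "y \<in> dual_code n (cyclic_code n A)" "wt {..<n} y = r + \<delta> - 1" "\<delta> \<le> wt {..<n} y"
proof -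
  have "0 \<in> A_exps"
    using m by (simp add: A_exps_def)
  then have "geom_word n (root_at 0) \<in> dual_code n (cyclic_code n A)"
    using n_pos roots_A by (intro geom_word_in_dual_code) (auto simp: A_eq)
  moreover have "wt {..<n} (geom_word n (root_at 0)) \<noteq> 0"
    using n_pos root_at_nonzero by (simp add: wt_geom_word)
  ultimately obtain y where y: "y \<in> dual_code n (cyclic_code n A)" "wt {..<n} y \<noteq> 0"
    "wt {..<n} y = min_dist {..<n} (dual_code n (cyclic_code n A))"
    by (rule min_dist_attained)
  moreover have "\<delta> \<le> wt {..<n} y"
    using dual_weight_bound[OF y(1,2)] \<delta> by linarith
  ultimately show ?thesis
    using that by (simp add: r_def)
qed

lemma r_pos: "r \<ge> 1"
proof -
  obtain y where "y \<in> dual_code n (cyclic_code n A)" "wt {..<n} y = r + \<delta> - 1" "\<delta> \<le> wt {..<n} y"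
    by (rule min_weight_dual_codeword)
  then show ?thesis
    using \<delta> by linarith
qed

lemma repair_groups:
  assumes "j < n"
  obtains S where "repair_group n C r \<delta> j S" "\<exists>x\<in>C. wt S x \<noteq> 0"
proof -
  obtain y where y: "y \<in> dual_code n (cyclic_code n A)" "wt {..<n} y = r + \<delta> - 1" "\<delta> \<le> wt {..<n} y"
    by (rule min_weight_dual_codeword)
  moreover have "wt {..<n} y \<noteq> 0"
    using y(3) \<delta> by linarith
  ultimately obtain S where S: "S \<subseteq> {..<n}" "j \<in> S" "card S = r + \<delta> - 1"
    "\<forall>x\<in>C. wt S x \<noteq> 0 \<longrightarrow> \<delta> - 1 < wt S x"
    unfolding C_def
    using dual_codeword_repair_groups[OF n_pos primitive_\<omega> roots_A roots_A_B A_shifts y(1) _ assms]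
    by auto
  have "repair_group n C r \<delta> j S"
    using S by (auto simp: repair_group_def)
  moreover have "wt S (geom_word n (inverse (root_at (n - 1)))) \<noteq> 0"
    using S(1,2) finite_subset[OF S(1)] by (auto simp: wt_geom_word root_at_nonzero Int_absorb2)
  ultimately show ?thesis
    using that full_weight_codeword by blast
qed

lemma is_LRC_C: "is_LRC n C r \<delta>"
  unfolding is_LRC_def using r_pos \<delta> by (metis repair_groups has_locality_if_repair_group)

lemma low_weight_codeword:
  assumes "s * r < code_dim C"
  obtains c where "c \<in> C" "wt {..<n} c \<noteq> 0" "wt {..<n} c \<le> m + \<delta> - 1"
proof -
  let ?k = "code_dim C"
  have k: "?k + s * (\<delta> - 1) + (m + \<delta> - 2) = n" "?k \<ge> 1"
    using dim_C card_AB_exps_le n_pos by simp_all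
  have C: "vs.subspace C" "C \<subseteq> words n"
    unfolding C_def using cyclic_code_subspace cyclic_code_subset_words n_pos roots_A_B by blast+
  moreover have "\<forall>j<n. \<exists>S. repair_group n C r \<delta> j S"
    using repair_groups by metis
  moreover have "vs.dim C = ?k"
    by (simp add: code_dim_def)
  moreover have "\<delta> \<ge> 1" and "?k - 1 + s * (\<delta> - 1) \<le> n"
    using k \<delta> by linarith+
  ultimately obtain c where c: "c \<in> C" "c \<noteq> 0" "wt {..<n} c \<le> n - (?k - 1 + s * (\<delta> - 1))"
    using lrc_singleton_bound[of C n r \<delta> s] assms by metis
  moreover have "wt {..<n} c \<noteq> 0"
    using c(1,2) C(2) wt_eq_0_iff by blast
  moreover have "n - (?k - 1 + s * (\<delta> - 1)) = m + \<delta> - 1"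
    using k \<delta> m by linarith
  ultimately show ?thesis
    using that by simp
qed

lemma optimal_if_ceiling:
  assumes "\<lceil>real (code_dim C) / real r\<rceil> = int s + 1"
  shows "is_optimal_LRC n C r \<delta> \<and> min_dist {..<n} C = m + \<delta> - 1"
proof -
  have "real s < real (code_dim C) / real r"
    using assms by (simp add: ceiling_eq_iff)
  then have "s * r < code_dim C"
    using r_pos by (simp add: pos_less_divide_eq flip: of_nat_mult)
  then obtain c where "c \<in> C" "wt {..<n} c \<noteq> 0" "wt {..<n} c \<le> m + \<delta> - 1"
    by (rule low_weight_codeword)
  then have "min_dist {..<n} C = m + \<delta> - 1"
    using C_weight_bound by (intro min_dist_eqI) fastforce+
  then show ?thesis
    using is_LRC_C assms dim_C_int \<delta> m by (simp add: is_optimal_LRC_def of_nat_diff algebra_simps)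
qed

end

theorem theorem4p1:
  fixes \<alpha> :: "'a::{field,finite}"
    and n \<delta> b s m t :: nat and i :: "nat \<Rightarrow> nat"
  assumes "n dvd (card (UNIV :: 'a set) - 1)"
    and "\<alpha> ^ n = 1" and "\<forall>j. 0 < j \<and> j < n \<longrightarrow> \<alpha> ^ j \<noteq> 1"
    and "\<delta> \<ge> 2" and "b \<ge> 1" and "s \<ge> 1" and "m \<ge> 1" and "coprime b n"
    and "t < n"
    and "m - 1 + \<delta> \<le> i 1" and "i s + \<delta> \<le> n"
    and "\<forall>l. 1 \<le> l \<and> l < s \<longrightarrow> i l + \<delta> \<le> i (l + 1)"
  defines "A \<equiv> {\<alpha> ^ (t + j * b) | j. j < m} \<union> {\<alpha> ^ (t + i l * b) | l. 1 \<le> l \<and> l \<le> s}"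
    and "B \<equiv> {\<alpha> ^ (j * b) | j. j \<le> \<delta> - 2}"
  defines "C \<equiv> cyclic_code n (set_prod A B)"
    and "k \<equiv> code_dim (cyclic_code n (set_prod A B))"
    and "r \<equiv> min_dist {..<n} (dual_code n (cyclic_code n A)) + 1 - \<delta>"
  shows "is_LRC n C r \<delta> \<and>
         int k = int n - int m + 1 - (int s + 1) * (int \<delta> - 1) \<and>
         (\<lceil>real k / real r\<rceil> = int s + 1 \<longrightarrow>
            is_optimal_LRC n C r \<delta> \<and> min_dist {..<n} C = m + \<delta> - 1)"
proof -
  interpret L: lrc_construction \<alpha> n \<delta> b s m t i
    using assms(2-4,6-8,10-12) by unfold_locales (simp_all add: primitive_root_def)
  have "A = L.A" "B = L.B"
    unfolding A_def B_def L.A_def L.B_def by (rule refl)+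
  then have "C = L.C" "k = code_dim L.C" "r = L.r"
    unfolding C_def k_def r_def L.C_def L.r_def by simp_all
  then show ?thesis
    using L.is_LRC_C L.dim_C_int L.optimal_if_ceiling by simp
qed

end
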